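(* Let $X$ be an Alexandroff space, $Y$ a topological space, $x\in X$, and $f:X\to Y$ a map with closed graph. Then the restriction of $f$ to $[x]_{\Re_X}$ is constant.
   Context: For a map $f:X\to Y$ its graph is $G_f=\{(x,f(x)):x\in X\}$; $f$ has closed graph if $G_f$ is closed in $X\times Y$ (product topology). A topological space $X$ is an Alexandroff space if the intersection of every nonempty family of open subsets of $X$ is open; equivalently, every point $a\in X$ has a smallest open neighbourhood, denoted $V_a$. On an Alexandroff space $X$ define the relation $\Re_X$ by: $(x,y)\in\Re_X$ iff there exist $x=x_1,x_2,\ldots,x_n=y$ in $X$ with $V_{x_i}\cap V_{x_{i+1}}\neq\emptyset$ for all $i\in\{1,\ldots,n-1\}$. This is an equivalence relation, and $[x]_{\Re_X}=\{y\in X:(x,y)\in\Re_X\}$ denotes the equivalence class of $x$. *)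

theory Defs
  imports "HOL-Analysis.Analysis"
begin

definition alexandroff_space :: "'a topology \<Rightarrow> bool" where
  "alexandroff_space X \<longleftrightarrow>
     (\<forall>\<U>. \<U> \<noteq> {} \<and> (\<forall>U\<in>\<U>. openin X U) \<longrightarrow> openin X (\<Inter>\<U>))"

text \<open>Smallest open neighbourhood of a point (meaningful in an Alexandroff space).\<close>
definition min_nbhd :: "'a topology \<Rightarrow> 'a \<Rightarrow> 'a set" where
  "min_nbhd X a = \<Inter>{U. openin X U \<and> a \<in> U}"

definition alex_rel :: "'a topology \<Rightarrow> 'a \<Rightarrow> 'a \<Rightarrow> bool" where
  "alex_rel X x y \<longleftrightarrow>
     (\<exists>xs. xs \<noteq> [] \<and> set xs \<subseteq> topspace X \<and> hd xs = x \<and> last xs = y \<and>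
        (\<forall>i. Suc i < length xs \<longrightarrow> min_nbhd X (xs ! i) \<inter> min_nbhd X (xs ! Suc i) \<noteq> {}))"

definition alex_class :: "'a topology \<Rightarrow> 'a \<Rightarrow> 'a set" where
  "alex_class X x = {y \<in> topspace X. alex_rel X x y}"

definition graph_of :: "'a topology \<Rightarrow> ('a \<Rightarrow> 'b) \<Rightarrow> ('a \<times> 'b) set" where
  "graph_of X f = {(x, f x) | x. x \<in> topspace X}"

end

theory Submission
  imports Defs
begin

text \<open>If \<open>z\<close> lies in the smallest neighbourhood \<open>V\<^sub>a\<close>, every basic neighbourhood
  \<open>U \<times> V\<close> of \<open>(a, f z)\<close> contains the graph point \<open>(z, f z)\<close>; so \<open>(a, f z)\<close> lies in the
  closure of the graph, which is the graph itself, and \<open>f z = f a\<close>. Thus \<open>f\<close> is constant on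
  each \<open>V\<^sub>a\<close>, and a common point of consecutive neighbourhoods in a chain forces equal
  values at consecutive points.\<close>

lemma min_nbhd_subset_openin:
  assumes "openin X U" and "a \<in> U"
  shows "min_nbhd X a \<subseteq> U"
  using assms unfolding min_nbhd_def by blast

lemma graph_of_closed_eq_on_min_nbhd:
  assumes a: "a \<in> topspace X" and z: "z \<in> min_nbhd X a"
    and f: "f \<in> topspace X \<rightarrow> topspace Y"
    and closed: "closedin (prod_topology X Y) (graph_of X f)"
  shows "f z = f a"
proof (rule ccontr)
  assume "f z \<noteq> f a"
  have z_space: "z \<in> topspace X"
    using z min_nbhd_subset_openin[OF openin_topspace a] by blast
  have "(a, f z) \<in> topspace (prod_topology X Y) - graph_of X f"
    using a z_space f \<open>f z \<noteq> f a\<close> by (auto simp: graph_of_def)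
  moreover have "openin (prod_topology X Y) (topspace (prod_topology X Y) - graph_of X f)"
    using closed by (simp add: closedin_def)
  ultimately obtain U V where UV: "openin X U" "a \<in> U" "f z \<in> V"
      "U \<times> V \<subseteq> topspace (prod_topology X Y) - graph_of X f"
    unfolding openin_prod_topology_alt by blast
  have "(z, f z) \<in> U \<times> V"
    using z min_nbhd_subset_openin[OF UV(1,2)] UV(3) by blast
  moreover have "(z, f z) \<in> graph_of X f"
    using z_space by (auto simp: graph_of_def)
  ultimately show False
    using UV(4) by blast
qed

lemma chain_last_eq_hd:
  assumes "xs \<noteq> []"
    and "\<And>i. Suc i < length xs \<Longrightarrow> g (xs ! i) = g (xs ! Suc i)"
  shows "g (last xs) = g (hd xs)"
  using assms
proof (induction xs)
  case Nil
  then show ?case by simp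
next
  case (Cons a xs)
  show ?case
  proof (cases "xs = []")
    case True
    then show ?thesis by simp
  next
    case False
    have "g (last xs) = g (hd xs)"
      using Cons.IH[OF False] Cons.prems(2)[of "Suc _"] by simp
    moreover have "g a = g (hd xs)"
      using Cons.prems(2)[of 0] False by (simp add: hd_conv_nth)
    ultimately show ?thesis
      using False by simp
  qed
qed

lemma graph_of_closed_eq_on_alex_rel:
  assumes f: "f \<in> topspace X \<rightarrow> topspace Y"
    and closed: "closedin (prod_topology X Y) (graph_of X f)"
    and "alex_rel X x y"
  shows "f y = f x"
proof -
  obtain xs where xs: "xs \<noteq> []" "set xs \<subseteq> topspace X" "hd xs = x" "last xs = y"
    and meet: "\<And>i. Suc i < length xs \<Longrightarrow> min_nbhd X (xs ! i) \<inter> min_nbhd X (xs ! Suc i) \<noteq> {}"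
    using \<open>alex_rel X x y\<close> unfolding alex_rel_def by blast
  have "f (xs ! i) = f (xs ! Suc i)" if i: "Suc i < length xs" for i
  proof -
    obtain z where "z \<in> min_nbhd X (xs ! i)" "z \<in> min_nbhd X (xs ! Suc i)"
      using meet[OF i] by blast
    moreover have "xs ! i \<in> topspace X" "xs ! Suc i \<in> topspace X"
      using xs(2) i by auto
    ultimately show ?thesis
      using graph_of_closed_eq_on_min_nbhd[OF _ _ f closed] by metis
  qed
  then show ?thesis
    using chain_last_eq_hd[OF xs(1)] xs(3,4) by blast
qed

theorem lemma3p3:
  fixes X :: "'a topology" and Y :: "'b topology" and f :: "'a \<Rightarrow> 'b" and x :: 'a
  assumes "alexandroff_space X"
    and "x \<in> topspace X"
    and "f \<in> topspace X \<rightarrow> topspace Y"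
    and "closedin (prod_topology X Y) (graph_of X f)"
  shows "\<exists>c. \<forall>y \<in> alex_class X x. f y = c"
  using graph_of_closed_eq_on_alex_rel[OF assms(3,4)] unfolding alex_class_def by blast

end
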